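(* Let $(P_1,\dots,P_J)$ be a stochastically rationalizable stochastic demand system assigning probability zero to patches that lie on more than one budget plane, and let $\pi=(\pi_{-J}',\pi_J')'$ be its vector representation. For $k\in\{1,\dots,G\}$ let $\delta_k(J)=\int y_k\,dP_J(y)$ be expected demand for good $k$ on $\mathcal{B}_J$. Then $$\underline\delta_k(J)\le\delta_k(J)\le\overline\delta_k(J),$$ where $\underline\delta_k(J)=\min\{\underline d_k(J)A_J\nu:\ A_{-J}\nu=\pi_{-J},\ \nu\ge0\}$ and $\overline\delta_k(J)=\max\{\overline d_k(J)A_J\nu:\ A_{-J}\nu=\pi_{-J},\ \nu\ge0\}$.
   Context: Budget planes $\mathcal B_j=\{y\in\mathbf R^G_+:p_j'y=1\}$, $p_j\in\mathbf R^G_{++}$. Patches are cells of the coarsest partition of $\bigcup_j\mathcal B_j$ such that each cell is, for every $j$, entirely on, strictly above or strictly below $\mathcal B_j$; patches on more than one budget plane are dropped, $x_{1|j},\dots,x_{I_j|j}$ are the remaining patches in $\mathcal B_j$, $I=\sum_jI_j$, with fixed representatives $y^*_{i|j}\in x_{i|j}$. A demand vector $(d_1,\dots,d_J)\in\prod_j\mathcal B_j$ is rationalizable if some strictly increasing $u:\mathbf R^G_+\to\mathbf R$ has $d_j\in\arg\max_{\mathcal B_j}u$ for all $j$. A stochastic demand system $(P_1,\dots,P_J)$ ($P_j$ a probability on $\mathcal B_j$) is stochastically rationalizable if some probability on $\prod_j\mathcal B_j$ concentrated on rationalizable demand vectors has marginals $P_1,\dots,P_J$. Its vector representation $\pi\in\mathbf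 R^I$ has $j$-th block $(P_j(x_{1|j}),\dots,P_j(x_{I_j|j}))$. $A\in\{0,1\}^{I\times H}$ has as columns (each once) exactly the binary $I$-vectors with one $1$ per block, at position $i_j$ in block $j$, such that $(y^*_{i_1|1},\dots,y^*_{i_J|J})$ is rationalizable. $A_J,\pi_J$ denote the rows/entries of block $J$ and $A_{-J},\pi_{-J}$ the rest. $\underline d_k(J)=(\underline d_k(1|J),\dots,\underline d_k(I_J|J))$ and $\overline d_k(J)=(\overline d_k(1|J),\dots,\overline d_k(I_J|J))$ are row vectors with $\underline d_k(i|J)=\inf\{y_k:y\in x_{i|J}\}$ and $\overline d_k(i|J)=\sup\{y_k:y\in x_{i|J}\}$. *)

theory Defs
  imports "HOL-Analysis.Analysis" "HOL-Probability.Probability"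
begin

text \<open>Goods are indexed by a finite type 'g (so R^G is real^'g), budgets by a finite type 'j.\<close>

definition orthant :: "(real^'g) set" where
  "orthant = {y. \<forall>i. 0 \<le> y$i}"

definition budget :: "('j \<Rightarrow> real^'g) \<Rightarrow> 'j \<Rightarrow> (real^'g) set" where
  "budget p j = {y \<in> orthant. p j \<bullet> y = 1}"

definition union_budgets :: "('j \<Rightarrow> real^'g) \<Rightarrow> (real^'g) set" where
  "union_budgets p = (\<Union>j. budget p j)"

text \<open>The patch containing y: points of the union of budget planes having the same
  position (on / strictly above / strictly below) as y relative to every budget plane.
  These are the cells of the coarsest such partition.\<close>
definition patch_of :: "('j \<Rightarrow> real^'g) \<Rightarrow> real^'g \<Rightarrow> (real^'g) set" where
  "patch_of p y = {z \<in> union_budgets p. \<forall>j. sgn (p j \<bullet> z - 1) = sgn (p j \<bullet> y - 1)}"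

definition patches :: "('j \<Rightarrow> real^'g) \<Rightarrow> (real^'g) set set" where
  "patches p = patch_of p ` union_budgets p"

definition multi_patches :: "('j \<Rightarrow> real^'g) \<Rightarrow> (real^'g) set set" where
  "multi_patches p = {x \<in> patches p. \<exists>j k. j \<noteq> k \<and> x \<subseteq> budget p j \<and> x \<subseteq> budget p k}"

definition patches_in :: "('j \<Rightarrow> real^'g) \<Rightarrow> 'j \<Rightarrow> (real^'g) set set" where
  "patches_in p j = {x \<in> patches p. x \<subseteq> budget p j \<and> (\<forall>k. k \<noteq> j \<longrightarrow> \<not> x \<subseteq> budget p k)}"

definition strictly_increasing :: "(real^'g \<Rightarrow> real) \<Rightarrow> bool" where
  "strictly_increasing u \<longleftrightarrow>
     (\<forall>y y'. y \<in> orthant \<and> y' \<in> orthant \<and> (\<forall>i. y'$i \<le> y$i) \<and> y' \<noteq> y \<longrightarrow> u y' < u y)"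

definition rationalizable :: "('j \<Rightarrow> real^'g) \<Rightarrow> ('j \<Rightarrow> real^'g) \<Rightarrow> bool" where
  "rationalizable p d \<longleftrightarrow> (\<forall>j. d j \<in> budget p j) \<and>
     (\<exists>u. strictly_increasing u \<and> (\<forall>j. \<forall>y\<in>budget p j. u y \<le> u (d j)))"

definition stoch_demand_system :: "('j \<Rightarrow> real^'g) \<Rightarrow> ('j \<Rightarrow> (real^'g) measure) \<Rightarrow> bool" where
  "stoch_demand_system p P \<longleftrightarrow>
     (\<forall>j. prob_space (P j) \<and> sets (P j) = sets borel \<and> emeasure (P j) (budget p j) = 1)"

definition stoch_rationalizable :: "('j::finite \<Rightarrow> real^'g) \<Rightarrow> ('j \<Rightarrow> (real^'g) measure) \<Rightarrow> bool" where
  "stoch_rationalizable p P \<longleftrightarrow>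
     (\<exists>Q. prob_space Q \<and> sets Q = sets (Pi\<^sub>M UNIV (\<lambda>_. borel)) \<and>
          (AE d in Q. rationalizable p d) \<and>
          (\<forall>j. distr Q borel (\<lambda>d. d j) = P j))"

text \<open>Columns of the matrix A: one remaining patch per budget such that the vector of
  representatives is rationalizable.  A column c is encoded as the choice function j \<mapsto> c j.\<close>
definition columns :: "('j \<Rightarrow> real^'g) \<Rightarrow> ((real^'g) set \<Rightarrow> real^'g) \<Rightarrow> ('j \<Rightarrow> (real^'g) set) set" where
  "columns p rep = {c. (\<forall>j. c j \<in> patches_in p j) \<and> rationalizable p (\<lambda>j. rep (c j))}"

definition Amul :: "('j \<Rightarrow> real^'g) \<Rightarrow> ((real^'g) set \<Rightarrow> real^'g) \<Rightarrow> (('j \<Rightarrow> (real^'g) set) \<Rightarrow> real)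
                     \<Rightarrow> 'j \<Rightarrow> (real^'g) set \<Rightarrow> real" where
  "Amul p rep \<nu> j x = (\<Sum>c\<in>{c \<in> columns p rep. c j = x}. \<nu> c)"

definition feasible :: "('j \<Rightarrow> real^'g) \<Rightarrow> ((real^'g) set \<Rightarrow> real^'g) \<Rightarrow> ('j \<Rightarrow> (real^'g) measure) \<Rightarrow> 'j
                         \<Rightarrow> (('j \<Rightarrow> (real^'g) set) \<Rightarrow> real) set" where
  "feasible p rep P jJ = {\<nu>. (\<forall>c. 0 \<le> \<nu> c) \<and>
      (\<forall>j x. j \<noteq> jJ \<and> x \<in> patches_in p j \<longrightarrow> Amul p rep \<nu> j x = measure (P j) x)}"

definition d_low :: "'g \<Rightarrow> (real^'g) set \<Rightarrow> real" where
  "d_low k x = Inf ((\<lambda>y. y$k) ` x)"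

definition d_up :: "'g \<Rightarrow> (real^'g) set \<Rightarrow> real" where
  "d_up k x = Sup ((\<lambda>y. y$k) ` x)"

definition obj :: "('j \<Rightarrow> real^'g) \<Rightarrow> ((real^'g) set \<Rightarrow> real^'g) \<Rightarrow> 'j \<Rightarrow> ((real^'g) set \<Rightarrow> real)
                    \<Rightarrow> (('j \<Rightarrow> (real^'g) set) \<Rightarrow> real) \<Rightarrow> real" where
  "obj p rep jJ d \<nu> = (\<Sum>x\<in>patches_in p jJ. d x * Amul p rep \<nu> jJ x)"

text \<open>The LP min / max, taken as Inf / Sup in the extended reals.\<close>
definition delta_low :: "('j \<Rightarrow> real^'g) \<Rightarrow> ((real^'g) set \<Rightarrow> real^'g) \<Rightarrow> ('j \<Rightarrow> (real^'g) measure) \<Rightarrow> 'j \<Rightarrow> 'g \<Rightarrow> ereal" where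
  "delta_low p rep P jJ k = Inf ((\<lambda>\<nu>. ereal (obj p rep jJ (d_low k) \<nu>)) ` feasible p rep P jJ)"

definition delta_up :: "('j \<Rightarrow> real^'g) \<Rightarrow> ((real^'g) set \<Rightarrow> real^'g) \<Rightarrow> ('j \<Rightarrow> (real^'g) measure) \<Rightarrow> 'j \<Rightarrow> 'g \<Rightarrow> ereal" where
  "delta_up p rep P jJ k = Sup ((\<lambda>\<nu>. ereal (obj p rep jJ (d_up k) \<nu>)) ` feasible p rep P jJ)"

end

theory Submission
  imports Defs
begin

text \<open>A rationalizing distribution \<open>Q\<close> on demand profiles yields weights on the columns of \<open>A\<close>:
  the weight of a column \<open>c\<close> is the \<open>Q\<close>-probability that every \<open>d j\<close> lies in the patch \<open>c j\<close>.
  Rationalizability of a profile depends only on whether each \<open>d j\<close> lies below, on or above each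
  budget plane (by an Afriat-type construction of the utility), so almost every profile falls into
  exactly one column; hence these weights satisfy \<open>A \<nu> = \<pi>\<close> and are feasible for both linear
  programs. On budget plane \<open>J\<close> the coordinate \<open>y\<^sub>k\<close> lies between the infimum and the supremum
  over its patch, and integrating these patchwise bounds against \<open>P\<^sub>J\<close> gives exactly the two
  objective values at \<open>\<nu>\<close>.\<close>

lemma mem_patch_of_self: "y \<in> union_budgets p \<Longrightarrow> y \<in> patch_of p y"
  unfolding patch_of_def by simp

lemma mem_patches_iff:
  assumes "x \<in> patches p" "y \<in> union_budgets p"
  shows "y \<in> x \<longleftrightarrow> x = patch_of p y"
proof -
  obtain w where "x = patch_of p w"
    using assms(1) unfolding patches_def by auto
  then show ?thesis
    using mem_patch_of_self[OF assms(2)] unfolding patch_of_def by auto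
qed

lemma patches_disjoint:
  assumes "x \<in> patches p" "x' \<in> patches p" "x \<noteq> x'"
  shows "x \<inter> x' = {}"
proof -
  have "x \<subseteq> union_budgets p"
    using assms(1) unfolding patches_def patch_of_def by auto
  then show ?thesis
    using mem_patches_iff[OF assms(1)] mem_patches_iff[OF assms(2)] assms(3) by blast
qed

lemma finite_patches: "finite (patches (p :: 'j::finite \<Rightarrow> real^'g))"
proof -
  define cell where "cell s = {z \<in> union_budgets p. \<forall>j. sgn (p j \<bullet> z - 1) = s j}"
    for s :: "'j \<Rightarrow> real"
  have "patch_of p y = cell (\<lambda>j. sgn (p j \<bullet> y - 1))" for y
    unfolding patch_of_def cell_def ..
  moreover have "(\<lambda>j. sgn (p j \<bullet> y - 1)) \<in> (\<Pi>\<^sub>E j\<in>UNIV. {-1, 0, 1})" for y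
    by (simp add: PiE_UNIV_domain sgn_real_def)
  ultimately have "patches p \<subseteq> cell ` (\<Pi>\<^sub>E j\<in>UNIV. {-1, 0, 1})"
    unfolding patches_def by blast
  moreover have "finite (\<Pi>\<^sub>E j::'j\<in>UNIV. {-1, 0, 1::real})"
    by (intro finite_PiE) auto
  ultimately show ?thesis
    using finite_surj by blast
qed

lemma finite_patches_in: "finite (patches_in (p :: 'j::finite \<Rightarrow> real^'g) j)"
  by (rule finite_subset[OF _ finite_patches]) (auto simp: patches_in_def)

lemma finite_multi_patches: "finite (multi_patches (p :: 'j::finite \<Rightarrow> real^'g))"
  by (rule finite_subset[OF _ finite_patches]) (auto simp: multi_patches_def)

lemma finite_columns: "finite (columns (p :: 'j::finite \<Rightarrow> real^'g) rep)"
proof (rule finite_subset)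
  show "columns p rep \<subseteq> (\<Pi>\<^sub>E j\<in>UNIV. patches p)"
    by (auto simp: columns_def patches_in_def PiE_UNIV_domain)
  show "finite (\<Pi>\<^sub>E j::'j\<in>UNIV. patches p)"
    by (intro finite_PiE) (auto simp: finite_patches)
qed

lemma patches_borel:
  assumes "x \<in> patches (p :: 'j::finite \<Rightarrow> real^'g)"
  shows "x \<in> sets borel"
proof -
  obtain y where "x = patch_of p y"
    using assms unfolding patches_def by auto
  also have "patch_of p y = {z \<in> space borel. (\<exists>j. (\<forall>i. 0 \<le> z$i) \<and> p j \<bullet> z = 1)
      \<and> (\<forall>j. sgn (p j \<bullet> z - 1) = sgn (p j \<bullet> y - 1))}"
    unfolding patch_of_def union_budgets_def budget_def orthant_def by auto
  also have "\<dots> \<in> sets borel"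
  proof -
    have [measurable]: "Measurable.pred borel (\<lambda>z::real^'g. 0 \<le> z$i)" for i
      by measurable
    have [measurable]: "Measurable.pred borel (\<lambda>z::real^'g. p j \<bullet> z = 1)" for j
      by measurable
    have [measurable]: "Measurable.pred borel (\<lambda>z::real^'g. sgn (p j \<bullet> z - 1) = sgn (p j \<bullet> y - 1))"
      for j by measurable
    show ?thesis
      by measurable
  qed
  finally show ?thesis .
qed

lemma patch_of_subset_budget:
  assumes "y \<in> budget p j"
  shows "patch_of p y \<subseteq> budget p j"
proof
  fix z assume z: "z \<in> patch_of p y"
  then have "sgn (p j \<bullet> z - 1) = sgn (p j \<bullet> y - 1)"
    unfolding patch_of_def by auto
  also have "\<dots> = 0"
    using assms unfolding budget_def by simp
  finally show "z \<in> budget p j"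
    using z unfolding patch_of_def union_budgets_def budget_def by (auto simp: sgn_eq_0_iff)
qed

lemma patch_of_in_patches_in:
  assumes "y \<in> budget p j" "\<forall>x\<in>multi_patches p. y \<notin> x"
  shows "patch_of p y \<in> patches_in p j"
proof -
  have y: "y \<in> union_budgets p"
    using assms(1) unfolding union_budgets_def by auto
  then have patch: "patch_of p y \<in> patches p"
    unfolding patches_def by auto
  have "\<not> patch_of p y \<subseteq> budget p k" if "k \<noteq> j" for k
    using assms mem_patch_of_self[OF y] patch patch_of_subset_budget[OF assms(1)] that
    unfolding multi_patches_def by blast
  then show ?thesis
    using patch patch_of_subset_budget[OF assms(1)] unfolding patches_in_def by blast
qed

lemma inner_strict_mono_pos:
  fixes q y y' :: "real^'g"
  assumes "\<forall>i. 0 < q$i" "\<forall>i. y'$i \<le> y$i" "y' \<noteq> y"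
  shows "q \<bullet> y' < q \<bullet> y"
proof -
  obtain k where k: "y'$k \<noteq> y$k"
    using assms(3) by (auto simp: vec_eq_iff)
  have "(\<Sum>i\<in>UNIV. q$i * y'$i) < (\<Sum>i\<in>UNIV. q$i * y$i)"
  proof (rule sum_strict_mono_ex1)
    show "\<forall>i\<in>UNIV. q$i * y'$i \<le> q$i * y$i"
      using assms by (simp add: less_imp_le mult_left_mono)
    show "\<exists>i\<in>UNIV. q$i * y'$i < q$i * y$i"
      using assms k by (metis UNIV_I mult_strict_left_mono order_le_imp_less_or_eq)
  qed simp
  then show ?thesis
    by (simp add: inner_vec_def)
qed

lemma inner_nonneg_orthant:
  fixes q y :: "real^'g"
  assumes "\<forall>i. 0 < q$i" "y \<in> orthant"
  shows "0 \<le> q \<bullet> y"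
  using assms unfolding orthant_def inner_vec_def
  by (auto intro!: sum_nonneg simp: less_imp_le)

lemma budget_point_above:
  fixes q y :: "real^'g"
  assumes "\<forall>i. 0 < q$i" "y \<in> orthant" "q \<bullet> y < 1"
  obtains z where "z \<in> orthant" "q \<bullet> z = 1" "\<forall>i. y$i \<le> z$i" "y \<noteq> z"
proof -
  fix k :: 'g
  define t where "t = (1 - q \<bullet> y) / q$k"
  have t: "0 < t"
    using assms by (simp add: t_def)
  define z where "z = y + axis k t"
  have "q$k \<noteq> 0"
    using assms(1) by (metis less_irrefl)
  then have "q \<bullet> z = 1"
    by (simp add: z_def t_def inner_add_right inner_axis)
  moreover have above: "\<forall>i. y$i \<le> z$i"
    using t by (simp add: z_def axis_def)
  moreover have "y \<noteq> z"
    using t by (auto simp: z_def vec_eq_iff axis_def)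
  moreover have "z \<in> orthant"
    using above assms(2) unfolding orthant_def by (auto intro: order_trans)
  ultimately show ?thesis
    using that by blast
qed

lemma budget_coordinate_bounds:
  fixes q z :: "real^'g"
  assumes "\<forall>i. 0 < q$i" "z \<in> orthant" "q \<bullet> z = 1"
  shows "0 \<le> z$k" "z$k \<le> 1 / q$k"
proof -
  have nonneg: "\<forall>i. 0 \<le> z$i"
    using assms(2) unfolding orthant_def by auto
  then show "0 \<le> z$k" by simp
  have "q$k * z$k \<le> (\<Sum>i\<in>UNIV. q$i * z$i)"
    by (rule member_le_sum) (use assms(1) nonneg in \<open>auto intro: mult_nonneg_nonneg less_imp_le\<close>)
  also have "\<dots> = 1"
    using assms(3) by (simp add: inner_vec_def)
  finally show "z$k \<le> 1 / q$k"
    using assms(1) by (simp add: field_simps mult.commute)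
qed

subsection \<open>Rationalizability depends only on patches\<close>

lemma rationalizable_imp_utility_levels:
  assumes pos: "\<forall>j i. 0 < p j $ i" and rat: "rationalizable p d"
  obtains r :: "'j \<Rightarrow> real"
  where "\<And>i j. p i \<bullet> d j < 1 \<Longrightarrow> r j < r i" "\<And>i j. p i \<bullet> d j = 1 \<Longrightarrow> r j \<le> r i"
proof -
  obtain u where u: "strictly_increasing u" "\<And>j y. y \<in> budget p j \<Longrightarrow> u y \<le> u (d j)"
    using rat unfolding rationalizable_def by blast
  have d: "d j \<in> orthant" for j
    using rat unfolding rationalizable_def budget_def by blast
  have strict: "u (d j) < u (d i)" if below: "p i \<bullet> d j < 1" for i j
  proof -
    have "\<forall>k. 0 < p i $ k"
      using pos by simp
    then obtain z where z: "z \<in> orthant" "p i \<bullet> z = 1" "\<forall>k. d j $ k \<le> z $ k" "d j \<noteq> z"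
      using d[of j] below by (rule budget_point_above)
    have "u (d j) < u z"
      using u(1) z d[of j] unfolding strictly_increasing_def by blast
    also have "u z \<le> u (d i)"
      using u(2)[of z i] z unfolding budget_def by simp
    finally show ?thesis .
  qed
  have weak: "u (d j) \<le> u (d i)" if "p i \<bullet> d j = 1" for i j
    using u(2)[of "d j" i] d[of j] that unfolding budget_def by simp
  show ?thesis
    by (rule that[of "u \<circ> d"]) (simp_all add: strict weak)
qed

lemma strictly_increasing_Min_affine:
  fixes p :: "'j::finite \<Rightarrow> real^'g" and r :: "'j \<Rightarrow> real" and h :: "real \<Rightarrow> real"
  assumes pos: "\<forall>j i. 0 < p j $ i" and h: "strict_mono h"
  shows "strictly_increasing (\<lambda>y. MIN i. r i + h (p i \<bullet> y - 1))"
  unfolding strictly_increasing_def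
proof (intro allI impI)
  fix y y' :: "real^'g"
  assume y: "y \<in> orthant \<and> y' \<in> orthant \<and> (\<forall>i. y'$i \<le> y$i) \<and> y' \<noteq> y"
  have "(MIN i. r i + h (p i \<bullet> y - 1)) \<in> range (\<lambda>i. r i + h (p i \<bullet> y - 1))"
    by (rule Min_in) auto
  then obtain i where i: "(MIN i. r i + h (p i \<bullet> y - 1)) = r i + h (p i \<bullet> y - 1)"
    by blast
  have "p i \<bullet> y' < p i \<bullet> y"
    using inner_strict_mono_pos[of "p i" y' y] pos y by auto
  then have "r i + h (p i \<bullet> y' - 1) < r i + h (p i \<bullet> y - 1)"
    using strict_monoD[OF h] by simp
  moreover have "(MIN i. r i + h (p i \<bullet> y' - 1)) \<le> r i + h (p i \<bullet> y' - 1)"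
    by (rule Min_le) auto
  ultimately show "(MIN i. r i + h (p i \<bullet> y' - 1)) < (MIN i. r i + h (p i \<bullet> y - 1))"
    using i by linarith
qed

text \<open>An Afriat-type construction: \<open>\<epsilon>\<close> is below every positive gap between utility levels and
  \<open>K\<close> above every gap, so the piece \<open>r i + h (p i \<bullet> y - 1)\<close> never undercuts \<open>r j\<close> at \<open>d j\<close>,
  while on budget plane \<open>j\<close> the piece indexed by \<open>j\<close> equals \<open>r j\<close>.\<close>

lemma rationalizable_of_utility_levels:
  fixes p :: "'j::finite \<Rightarrow> real^'g" and r :: "'j \<Rightarrow> real"
  assumes pos: "\<forall>j i. 0 < p j $ i"
    and d: "\<And>j. d j \<in> budget p j"
    and below: "\<And>i j. p i \<bullet> d j < 1 \<Longrightarrow> r j < r i"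
    and on: "\<And>i j. p i \<bullet> d j = 1 \<Longrightarrow> r j \<le> r i"
  shows "rationalizable p d"
proof -
  define \<epsilon> where "\<epsilon> = Min (insert 1 ((\<lambda>(i, j). r i - r j) ` {(i, j). r j < r i}))"
  have \<epsilon>_pos: "0 < \<epsilon>"
    unfolding \<epsilon>_def by auto
  have \<epsilon>_le: "\<epsilon> \<le> r i - r j" if "r j < r i" for i j
    unfolding \<epsilon>_def using that by (intro Min_le) auto
  define K where "K = Max (range r) - Min (range r)"
  have K: "r j - r i \<le> K" for i j
  proof -
    have "r j \<le> Max (range r)" "Min (range r) \<le> r i"
      by (auto intro: Max_ge Min_le)
    then show ?thesis
      unfolding K_def by linarith
  qed
  define h where "h t = \<epsilon> * t + (if 0 < t then K else 0)" for t :: real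
  have h: "strict_mono h"
    using \<epsilon>_pos K[of undefined undefined]
    by (intro strict_monoI) (auto simp: h_def add_strict_increasing2 add_less_le_mono)
  define u where "u y = (MIN i. r i + h (p i \<bullet> y - 1))" for y
  have piece_ge: "r j \<le> r i + h (p i \<bullet> d j - 1)" for i j
  proof (cases "p i \<bullet> d j - 1" "0::real" rule: linorder_cases)
    case less
    have "0 \<le> p i \<bullet> d j"
      using inner_nonneg_orthant[of "p i" "d j"] pos d[of j] unfolding budget_def by auto
    then have "-\<epsilon> \<le> \<epsilon> * (p i \<bullet> d j - 1)"
      using \<epsilon>_pos by (simp add: algebra_simps)
    moreover have "\<epsilon> \<le> r i - r j"
      using less by (intro \<epsilon>_le below) simp
    ultimately show ?thesis
      using less unfolding h_def by simp
  next
    case equal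
    then show ?thesis
      using on[of i j] unfolding h_def by simp
  next
    case greater
    then have "0 < \<epsilon> * (p i \<bullet> d j - 1)"
      using \<epsilon>_pos by simp
    then show ?thesis
      using K[of j i] greater unfolding h_def by simp
  qed
  have "u y \<le> u (d j)" if "y \<in> budget p j" for y j
  proof -
    have "u y \<le> r j + h (p j \<bullet> y - 1)"
      unfolding u_def by (rule Min_le) auto
    also have "\<dots> = r j"
      using that unfolding budget_def h_def by simp
    also have "\<dots> \<le> u (d j)"
      unfolding u_def using piece_ge by (intro Min.boundedI) auto
    finally show ?thesis .
  qed
  moreover have "strictly_increasing u"
    unfolding u_def by (rule strictly_increasing_Min_affine[OF pos h])
  ultimately show ?thesis
    unfolding rationalizable_def using d by blast
qed

lemma rationalizable_patch_invariant:
  fixes p :: "'j::finite \<Rightarrow> real^'g"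
  assumes pos: "\<forall>j i. 0 < p j $ i"
    and rat: "rationalizable p d"
    and d': "\<And>j. d' j \<in> patch_of p (d j)"
  shows "rationalizable p d'"
proof -
  obtain r :: "'j \<Rightarrow> real" where less: "\<And>i j. p i \<bullet> d j < 1 \<Longrightarrow> r j < r i"
      and eq: "\<And>i j. p i \<bullet> d j = 1 \<Longrightarrow> r j \<le> r i"
    using rationalizable_imp_utility_levels[OF pos rat] by blast
  have sgn_eq: "sgn (p i \<bullet> d' j - 1) = sgn (p i \<bullet> d j - 1)" for i j
    using d' unfolding patch_of_def by auto
  have less_iff: "p i \<bullet> d' j < 1 \<longleftrightarrow> p i \<bullet> d j < 1"
    and eq_iff: "p i \<bullet> d' j = 1 \<longleftrightarrow> p i \<bullet> d j = 1" for i j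
    using sgn_eq[of i j] by (auto simp: sgn_real_def split: if_splits)
  have "d' j \<in> budget p j" for j
    using d'[of j] patch_of_subset_budget[of "d j" p j] rat unfolding rationalizable_def by blast
  then show ?thesis
    by (rule rationalizable_of_utility_levels[OF pos]) (auto simp: less_iff eq_iff intro: less eq)
qed

lemma patch_profile_in_columns:
  fixes p :: "'j::finite \<Rightarrow> real^'g"
  assumes pos: "\<forall>j i. 0 < p j $ i"
    and rat: "rationalizable p d"
    and avoid: "\<forall>j. \<forall>x\<in>multi_patches p. d j \<notin> x"
    and rep: "\<forall>x\<in>patches p. rep x \<in> x"
  shows "(\<lambda>j. patch_of p (d j)) \<in> columns p rep"
proof -
  have budget: "d j \<in> budget p j" for j
    using rat unfolding rationalizable_def by blast
  have patch: "patch_of p (d j) \<in> patches_in p j" for j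
    using patch_of_in_patches_in[OF budget[of j]] avoid by blast
  have "rep (patch_of p (d j)) \<in> patch_of p (d j)" for j
    using rep patch[of j] unfolding patches_in_def by blast
  then have "rationalizable p (\<lambda>j. rep (patch_of p (d j)))"
    by (rule rationalizable_patch_invariant[OF pos rat])
  then show ?thesis
    using patch unfolding columns_def by simp
qed

subsection \<open>Expected demand on one budget plane\<close>

lemma AE_avoids_multi_patches:
  fixes p :: "'j::finite \<Rightarrow> real^'g"
  assumes "finite_measure M" "sets M = sets borel"
    and null: "\<forall>x\<in>multi_patches p. measure M x = 0"
  shows "AE y in M. \<forall>x\<in>multi_patches p. y \<notin> x"
proof (rule AE_finite_allI[OF finite_multi_patches])
  interpret finite_measure M by (rule assms(1))
  fix x assume x: "x \<in> multi_patches p"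
  then have "x \<in> sets M"
    using patches_borel assms(2) unfolding multi_patches_def by auto
  moreover have "emeasure M x = 0"
    using null x by (simp add: emeasure_eq_measure)
  ultimately have "x \<in> null_sets M"
    by auto
  then show "AE y in M. y \<notin> x"
    by (rule AE_not_in)
qed

lemma sum_indicator_patches_in:
  fixes p :: "'j::finite \<Rightarrow> real^'g"
  assumes "y \<in> budget p j" "patch_of p y \<in> patches_in p j"
  shows "(\<Sum>x\<in>patches_in p j. f x * indicator x y) = (f (patch_of p y) :: real)"
proof -
  have y: "y \<in> union_budgets p"
    using assms(1) unfolding union_budgets_def by auto
  have "indicator x y = (if x = patch_of p y then 1 else (0::real))" if "x \<in> patches_in p j" for x
    using mem_patches_iff[OF _ y] that unfolding patches_in_def by (auto simp: indicator_def)
  then have "(\<Sum>x\<in>patches_in p j. f x * indicator x y)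
      = (\<Sum>x\<in>patches_in p j. if x = patch_of p y then f x else 0)"
    by (intro sum.cong) auto
  also have "\<dots> = f (patch_of p y)"
    using assms(2) by (subst sum.delta) (auto intro: finite_patches_in)
  finally show ?thesis .
qed

lemma patch_of_coordinate_bounds:
  assumes "\<forall>i. 0 < p j $ i" "y \<in> budget p j"
  shows "d_low k (patch_of p y) \<le> y$k" "y$k \<le> d_up k (patch_of p y)"
proof -
  have "y \<in> union_budgets p"
    using assms(2) unfolding union_budgets_def by blast
  then have y: "y \<in> patch_of p y"
    by (rule mem_patch_of_self)
  have bounds: "0 \<le> z$k" "z$k \<le> 1 / p j $ k" if "z \<in> patch_of p y" for z
  proof -
    have "z \<in> budget p j"
      using patch_of_subset_budget[OF assms(2)] that by blast
    then show "0 \<le> z$k" "z$k \<le> 1 / p j $ k"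
      using budget_coordinate_bounds[OF assms(1), of z k] unfolding budget_def by simp_all
  qed
  have "bdd_below ((\<lambda>z. z$k) ` patch_of p y)"
    using bounds(1) by (intro bdd_belowI[of _ 0]) blast
  then show "d_low k (patch_of p y) \<le> y$k"
    unfolding d_low_def by (rule cInf_lower[OF imageI[OF y]])
  have "bdd_above ((\<lambda>z. z$k) ` patch_of p y)"
    using bounds(2) by (intro bdd_aboveI[of _ "1 / p j $ k"]) blast
  then show "y$k \<le> d_up k (patch_of p y)"
    unfolding d_up_def by (rule cSup_upper[OF imageI[OF y]])
qed

lemma integral_coordinate_patch_bounds:
  fixes p :: "'j::finite \<Rightarrow> real^'g" and M :: "(real^'g) measure"
  assumes pos: "\<forall>i. 0 < p j $ i"
    and M: "prob_space M" "sets M = sets borel" "emeasure M (budget p j) = 1"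
    and null: "\<forall>x\<in>multi_patches p. measure M x = 0"
  shows "(\<Sum>x\<in>patches_in p j. d_low k x * measure M x) \<le> (\<integral>y. y$k \<partial>M)"
    and "(\<integral>y. y$k \<partial>M) \<le> (\<Sum>x\<in>patches_in p j. d_up k x * measure M x)"
proof -
  interpret prob_space M by (rule M(1))
  have on_budget: "AE y in M. y \<in> budget p j"
    by (rule AE_prob_1) (use M(3) in \<open>simp add: measure_def\<close>)
  have AE_patch: "AE y in M. y \<in> budget p j \<and> patch_of p y \<in> patches_in p j"
    using on_budget AE_avoids_multi_patches[OF finite_measure_axioms M(2) null]
    by eventually_elim (auto intro: patch_of_in_patches_in)
  define step where "step f y = (\<Sum>x\<in>patches_in p j. f x * indicator x y)"
    for f :: "(real^'g) set \<Rightarrow> real" and y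
  have patch_sets: "x \<in> sets M" if "x \<in> patches_in p j" for x
    using patches_borel M(2) that unfolding patches_in_def by auto
  have step_integrable: "integrable M (step f)" for f
    unfolding step_def using patch_sets by (auto simp: emeasure_eq_measure)
  have step_integral: "integral\<^sup>L M (step f) = (\<Sum>x\<in>patches_in p j. f x * measure M x)" for f
    unfolding step_def using patch_sets by (simp add: emeasure_eq_measure)
  have step_patch: "AE y in M. step f y = f (patch_of p y)" for f
    using AE_patch by eventually_elim (simp add: step_def sum_indicator_patches_in)
  have coordinate_integrable: "integrable M (\<lambda>y. y$k)"
  proof (rule integrable_const_bound[where B="1 / p j $ k"])
    show "AE y in M. norm (y$k) \<le> 1 / p j $ k"
      using on_budget
      by eventually_elim (use budget_coordinate_bounds[OF pos] in \<open>auto simp: budget_def\<close>)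
  qed (simp add: measurable_cong_sets[OF M(2) refl])
  have "AE y in M. step (d_low k) y \<le> y$k"
    using AE_patch step_patch[of "d_low k"]
    by eventually_elim (use patch_of_coordinate_bounds[of p j, OF pos] in auto)
  then have "integral\<^sup>L M (step (d_low k)) \<le> (\<integral>y. y$k \<partial>M)"
    by (intro integral_mono_AE step_integrable coordinate_integrable)
  then show "(\<Sum>x\<in>patches_in p j. d_low k x * measure M x) \<le> (\<integral>y. y$k \<partial>M)"
    by (simp add: step_integral)
  have "AE y in M. y$k \<le> step (d_up k) y"
    using AE_patch step_patch[of "d_up k"]
    by eventually_elim (use patch_of_coordinate_bounds[of p j, OF pos] in auto)
  then have "(\<integral>y. y$k \<partial>M) \<le> integral\<^sup>L M (step (d_up k))"
    by (intro integral_mono_AE step_integrable coordinate_integrable)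
  then show "(\<integral>y. y$k \<partial>M) \<le> (\<Sum>x\<in>patches_in p j. d_up k x * measure M x)"
    by (simp add: step_integral)
qed

subsection \<open>Column weights from a rationalizing distribution\<close>

lemma measurable_component_sets_PiM:
  assumes "sets Q = sets (\<Pi>\<^sub>M j\<in>UNIV. borel)"
  shows "(\<lambda>d. d j) \<in> Q \<rightarrow>\<^sub>M borel"
  unfolding measurable_cong_sets[OF assms refl] by (rule measurable_component_singleton) simp

lemma sum_measure_column_events:
  fixes Q :: "('j::finite \<Rightarrow> real^'g) measure"
  assumes "prob_space Q" and sets_Q: "sets Q = sets (\<Pi>\<^sub>M j\<in>UNIV. borel)"
    and AE_col: "AE d in Q. (\<lambda>i. patch_of p (d i)) \<in> columns p rep \<and> (\<forall>i. d i \<in> union_budgets p)"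
    and x: "x \<in> patches_in p j"
  shows "(\<Sum>c\<in>{c \<in> columns p rep. c j = x}. measure Q {d \<in> space Q. \<forall>i. d i \<in> c i})
       = measure Q {d \<in> space Q. d j \<in> x}"
proof -
  interpret prob_space Q by fact
  define C where "C = {c \<in> columns p rep. c j = x}"
  define E where "E c = {d \<in> space Q. \<forall>i. d i \<in> c i}" for c :: "'j \<Rightarrow> (real^'g) set"
  have column_patches: "c i \<in> patches p" if "c \<in> columns p rep" for c i
    using that unfolding columns_def patches_in_def by auto
  have event_sets: "{d \<in> space Q. d i \<in> y} \<in> sets Q" if "y \<in> patches p" for i y
  proof -
    from measurable_sets[OF measurable_component_sets_PiM[OF sets_Q] patches_borel[OF that]]
    show ?thesis
      by (simp add: vimage_def Int_def conj_commute)
  qed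
  have E_sets: "E c \<in> sets Q" if "c \<in> C" for c
  proof -
    have "E c = (\<Inter>i\<in>UNIV. {d \<in> space Q. d i \<in> c i})"
      unfolding E_def by auto
    also have "\<dots> \<in> sets Q"
      using that column_patches event_sets unfolding C_def by (intro sets.finite_INT) auto
    finally show ?thesis .
  qed
  have finite_C: "finite C"
    unfolding C_def using finite_columns[of p rep] by simp
  have "(\<Sum>c\<in>C. measure Q (E c)) = measure Q (\<Union>c\<in>C. E c)"
  proof (rule measure_finite_Union[symmetric, OF finite_C])
    show "disjoint_family_on E C"
    proof (unfold disjoint_family_on_def, intro ballI impI)
      fix c c' assume cc': "c \<in> C" "c' \<in> C" "c \<noteq> c'"
      then obtain i where "c i \<noteq> c' i"
        by (meson ext)
      then have "c i \<inter> c' i = {}"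
        using cc' column_patches unfolding C_def by (intro patches_disjoint) auto
      then show "E c \<inter> E c' = {}"
        unfolding E_def by auto
    qed
  qed (use E_sets in \<open>auto simp: emeasure_eq_measure\<close>)
  also have "\<dots> = measure Q {d \<in> space Q. d j \<in> x}"
  proof (rule measure_eq_AE)
    show "AE d in Q. d \<in> (\<Union>c\<in>C. E c) \<longleftrightarrow> d \<in> {d \<in> space Q. d j \<in> x}"
      using AE_col
    proof eventually_elim
      case (elim d)
      have "x = patch_of p (d j)" if "d j \<in> x"
        using mem_patches_iff[of x p "d j"] x elim that unfolding patches_in_def by auto
      then show ?case
        using elim mem_patch_of_self unfolding C_def E_def by auto
    qed
    show "(\<Union>c\<in>C. E c) \<in> sets Q"
      using E_sets finite_C by auto
    show "{d \<in> space Q. d j \<in> x} \<in> sets Q"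
      using x event_sets unfolding patches_in_def by auto
  qed
  finally show ?thesis
    unfolding C_def E_def .
qed

lemma stoch_rationalizable_imp_column_weights:
  fixes p :: "'j::finite \<Rightarrow> real^'g"
  assumes pos: "\<forall>j i. 0 < p j $ i"
    and sds: "stoch_demand_system p P"
    and srat: "stoch_rationalizable p P"
    and null: "\<forall>j. \<forall>x\<in>multi_patches p. measure (P j) x = 0"
    and rep: "\<forall>x\<in>patches p. rep x \<in> x"
  obtains \<nu> where "\<And>c. 0 \<le> \<nu> c"
    and "\<And>j x. x \<in> patches_in p j \<Longrightarrow> Amul p rep \<nu> j x = measure (P j) x"
proof -
  obtain Q where Q: "prob_space Q" "sets Q = sets (\<Pi>\<^sub>M j\<in>UNIV. borel)"
      "AE d in Q. rationalizable p d" "\<And>j. distr Q borel (\<lambda>d. d j) = P j"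
    using srat unfolding stoch_rationalizable_def by blast
  interpret Q: prob_space Q by (rule Q(1))
  note component = measurable_component_sets_PiM[OF Q(2)]
  have avoid_sets: "{y \<in> space borel. \<forall>x\<in>multi_patches p. y \<notin> x} \<in> sets borel"
  proof -
    have "{y \<in> space borel. \<forall>x\<in>multi_patches p. y \<notin> x} = space borel - \<Union>(multi_patches p)"
      by auto
    also have "\<dots> \<in> sets borel"
      using finite_multi_patches patches_borel unfolding multi_patches_def
      by (intro sets.Diff sets.finite_Union) auto
    finally show ?thesis .
  qed
  have "AE d in Q. \<forall>x\<in>multi_patches p. d j \<notin> x" for j
  proof -
    have "AE y in P j. \<forall>x\<in>multi_patches p. y \<notin> x"
      using sds null unfolding stoch_demand_system_def
      by (intro AE_avoids_multi_patches) (auto intro: prob_space.finite_measure)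
    then have "AE y in distr Q borel (\<lambda>d. d j). \<forall>x\<in>multi_patches p. y \<notin> x"
      by (simp only: Q(4))
    then show ?thesis
      by (simp only: AE_distr_iff[OF component[of j] avoid_sets])
  qed
  then have "AE d in Q. \<forall>j. \<forall>x\<in>multi_patches p. d j \<notin> x"
    by (simp add: AE_all_countable)
  with Q(3) have AE_col:
    "AE d in Q. (\<lambda>i. patch_of p (d i)) \<in> columns p rep \<and> (\<forall>i. d i \<in> union_budgets p)"
  proof eventually_elim
    case (elim d)
    have "d i \<in> union_budgets p" for i
      using elim(1) unfolding rationalizable_def union_budgets_def by blast
    then show ?case
      using patch_profile_in_columns[OF pos elim rep] by blast
  qed
  define \<nu> where "\<nu> c = measure Q {d \<in> space Q. \<forall>i. d i \<in> c i}" for c :: "'j \<Rightarrow> (real^'g) set"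
  show ?thesis
  proof (rule that)
    show "0 \<le> \<nu> c" for c
      by (simp add: \<nu>_def)
    fix j x assume x: "x \<in> patches_in p j"
    have "Amul p rep \<nu> j x = measure Q {d \<in> space Q. d j \<in> x}"
      unfolding Amul_def \<nu>_def by (rule sum_measure_column_events[OF Q(1,2) AE_col x])
    also have "\<dots> = measure (P j) x"
    proof -
      have "x \<in> sets borel"
        using x patches_borel unfolding patches_in_def by blast
      moreover have "(\<lambda>d. d j) -` x \<inter> space Q = {d \<in> space Q. d j \<in> x}"
        by auto
      ultimately show ?thesis
        using measure_distr[OF component[of j]] Q(4)[of j] by metis
    qed
    finally show "Amul p rep \<nu> j x = measure (P j) x" .
  qed
qed

theorem corollary2:
  fixes p :: "'j::finite \<Rightarrow> real^'g"
    and P :: "'j \<Rightarrow> (real^'g) measure"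
    and rep :: "(real^'g) set \<Rightarrow> real^'g"
    and jJ :: 'j
    and k :: 'g
  assumes "\<forall>j i. 0 < p j $ i"
    and "stoch_demand_system p P"
    and "stoch_rationalizable p P"
    and "\<forall>j. \<forall>x\<in>multi_patches p. measure (P j) x = 0"
    and "\<forall>x\<in>patches p. rep x \<in> x"
  shows "delta_low p rep P jJ k \<le> ereal (\<integral>y. y$k \<partial>(P jJ))
       \<and> ereal (\<integral>y. y$k \<partial>(P jJ)) \<le> delta_up p rep P jJ k"
proof -
  obtain \<nu> where nonneg: "\<And>c. 0 \<le> \<nu> c"
    and represents: "\<And>j x. x \<in> patches_in p j \<Longrightarrow> Amul p rep \<nu> j x = measure (P j) x"
    using stoch_rationalizable_imp_column_weights[OF assms] by blast
  have feasible: "\<nu> \<in> feasible p rep P jJ"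
    unfolding feasible_def using nonneg represents by auto
  have obj: "obj p rep jJ f \<nu> = (\<Sum>x\<in>patches_in p jJ. f x * measure (P jJ) x)" for f
    unfolding obj_def by (simp add: represents)
  have P: "prob_space (P jJ)" "sets (P jJ) = sets borel" "emeasure (P jJ) (budget p jJ) = 1"
    using assms(2) unfolding stoch_demand_system_def by auto
  have "\<forall>i. 0 < p jJ $ i" "\<forall>x\<in>multi_patches p. measure (P jJ) x = 0"
    using assms(1,4) by simp_all
  note bounds = integral_coordinate_patch_bounds[OF this(1) P this(2), of k]
  have "delta_low p rep P jJ k \<le> ereal (obj p rep jJ (d_low k) \<nu>)"
    unfolding delta_low_def by (rule INF_lower[OF feasible])
  also have "\<dots> \<le> ereal (\<integral>y. y$k \<partial>(P jJ))"
    using bounds by (simp add: obj)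
  finally have lower: "delta_low p rep P jJ k \<le> ereal (\<integral>y. y$k \<partial>(P jJ))" .
  have "ereal (\<integral>y. y$k \<partial>(P jJ)) \<le> ereal (obj p rep jJ (d_up k) \<nu>)"
    using bounds by (simp add: obj)
  also have "\<dots> \<le> delta_up p rep P jJ k"
    unfolding delta_up_def by (rule SUP_upper[OF feasible])
  finally show ?thesis
    using lower by simp
qed

end
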